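(* Let $(X,T)$ be a topological dynamical system and $d\in\mathbb{N}$. (1) For every $n\in\mathbb{N}$, ${\bf P}(X,T)={\bf P}(X,T^n)$. (2) If ${\bf P}(X,T)$ is closed, then ${\bf P}(N_d(X),\mathcal{G}_d(T))=\{((x_i)_{i=1}^d,(y_i)_{i=1}^d)\in N_d(X)\times N_d(X):(x_i,y_i)\in{\bf P}(X,T)\text{ for }i=1,\dots,d\}$.
   Context: For a system $(Z,G)$, ${\bf P}(Z,G)=\{(x,y):\inf_{g\in G}\rho(gx,gy)=0\}$ (for $(X,S)$, $G=\{S^k:k\in\mathbb{Z}\}$). $N_d(X)=\overline{\{(T^{p+q}x,\dots,T^{p+dq}x):x\in X,p,q\in\mathbb{Z}\}}$, $\mathcal{G}_d(T)=\langle T\times\cdots\times T,\ T\times T^2\times\cdots\times T^d\rangle$. *)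

theory Defs
  imports "HOL-Analysis.Analysis"
begin

definition ipow :: "'a set \<Rightarrow> ('a \<Rightarrow> 'a) \<Rightarrow> int \<Rightarrow> 'a \<Rightarrow> 'a" where
  "ipow X T k = (if 0 \<le> k then T ^^ nat k else (the_inv_into X T) ^^ nat (- k))"

definition proximal_rel ::
    "('b \<Rightarrow> 'b \<Rightarrow> real) \<Rightarrow> 'b set \<Rightarrow> ('b \<Rightarrow> 'b) set \<Rightarrow> ('b \<times> 'b) set" where
  "proximal_rel rho Z G = {(x, y). x \<in> Z \<and> y \<in> Z \<and> (INF g\<in>G. rho (g x) (g y)) = 0}"

definition pow_group :: "'a set \<Rightarrow> ('a \<Rightarrow> 'a) \<Rightarrow> ('a \<Rightarrow> 'a) set" where
  "pow_group X T = {ipow X T k | k. True}"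

definition Prox :: "('a::metric_space) set \<Rightarrow> ('a \<Rightarrow> 'a) \<Rightarrow> ('a \<times> 'a) set" where
  "Prox X T = proximal_rel dist X (pow_group X T)"

text \<open>Points of X^d are represented by functions nat => 'a, extensional outside {1..d};
  the metric on X^d is the max metric.\<close>
definition dist_d :: "nat \<Rightarrow> (nat \<Rightarrow> 'a::metric_space) \<Rightarrow> (nat \<Rightarrow> 'a) \<Rightarrow> real" where
  "dist_d d u v = Max ((\<lambda>i. dist (u i) (v i)) ` {1..d})"

definition restr_d :: "nat \<Rightarrow> (nat \<Rightarrow> 'a) \<Rightarrow> nat \<Rightarrow> 'a" where
  "restr_d d f = (\<lambda>i. if i \<in> {1..d} then f i else undefined)"

definition Nd :: "nat \<Rightarrow> ('a::metric_space) set \<Rightarrow> ('a \<Rightarrow> 'a) \<Rightarrow> (nat \<Rightarrow> 'a) set" where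
  "Nd d X T = closure {restr_d d (\<lambda>i. ipow X T (p + int i * q) x) | x p q. x \<in> X}"

text \<open>G_d(T) = <T x ... x T, T x T^2 x ... x T^d>; since the generators commute its elements are
  exactly T^(a+b) x T^(a+2b) x ... x T^(a+db), a b in Z.\<close>
definition Gd :: "nat \<Rightarrow> 'a set \<Rightarrow> ('a \<Rightarrow> 'a) \<Rightarrow> ((nat \<Rightarrow> 'a) \<Rightarrow> (nat \<Rightarrow> 'a)) set" where
  "Gd d X T = {(\<lambda>u. restr_d d (\<lambda>i. ipow X T (a + int i * b) (u i))) | a b. True}"

end

theory Submission
  imports Defs
begin

(*
  (1) T^n-orbits are subsequences of T-orbits, so T^n-proximal pairs are T-proximal. Conversely,
  if T^k x and T^k y are close, then so are T^(nm) x and T^(nm) y for the multiple nm of n just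
  above k, by uniform continuity of the finitely many maps T^0, ..., T^(n-1) on the compact X.

  (2) Projecting to coordinates gives one inclusion. For the other, P(X,T) is closed, hence
  compact, and T-invariant, and finitely many proximal pairs can be made close at a common time
  by induction: along the times a at which the pairs already treated are delta-close, the orbit
  of the new pair has a cluster point (p,q) in P(X,T); a time m at which T^m p and T^m q are close,
  together with uniform continuity of T^m, makes all pairs close at time m + a. Since G_d(T)
  contains T x ... x T, this yields proximality in N_d(X).
*)

lemma bij_betw_ipow:
  assumes "bij_betw S X X"
  shows "bij_betw (ipow X S k) X X"
  using bij_betw_funpow[OF assms] bij_betw_funpow[OF bij_betw_the_inv_into[OF assms]]
  by (simp add: ipow_def)

lemma ipow_in:
  assumes "bij_betw S X X" "x \<in> X"
  shows "ipow X S k x \<in> X"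
  using bij_betwE[OF bij_betw_ipow[OF assms(1)]] assms(2) by blast

lemma ipow_of_nat [simp]: "ipow X S (int n) = S ^^ n"
  by (simp add: ipow_def)

lemma ipow_0 [simp]: "ipow X S 0 x = x"
  by (simp add: ipow_def)

lemma ipow_succ:
  assumes "bij_betw S X X" "x \<in> X"
  shows "ipow X S (k + 1) x = S (ipow X S k x)"
proof (cases "k \<ge> 0")
  case True
  then have "nat (k + 1) = Suc (nat k)" by simp
  with True show ?thesis by (simp add: ipow_def)
next
  case False
  define R where "R = the_inv_into X S"
  define n where "n = nat (- (k + 1))"
  have "bij_betw (R ^^ n) X X"
    unfolding R_def by (intro bij_betw_funpow bij_betw_the_inv_into assms(1))
  then have Rn: "(R ^^ n) x \<in> X" using assms(2) bij_betwE by blast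
  have "ipow X S (k + 1) x = (R ^^ n) x"
    using False by (cases "k = -1") (simp_all add: ipow_def R_def n_def)
  moreover have "nat (- k) = Suc n" using False by (simp add: n_def)
  then have "ipow X S k x = R ((R ^^ n) x)"
    using False by (simp add: ipow_def R_def)
  ultimately show ?thesis
    using f_the_inv_into_f_bij_betw[OF assms(1)] Rn by (simp add: R_def)
qed

lemma int_orbit_unique:
  fixes g h :: "int \<Rightarrow> 'a"
  assumes "inj_on F X"
    and "\<And>i. g i \<in> X" "\<And>i. h i \<in> X" "g 0 = h 0"
    and g_succ: "\<And>i. g (i + 1) = F (g i)" and h_succ: "\<And>i. h (i + 1) = F (h i)"
  shows "g i = h i"
proof (induction i rule: int_induct[where k = 0])
  case base
  show ?case by fact
next
  case (step1 i)
  then show ?case by (simp add: g_succ h_succ)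
next
  case (step2 i)
  then have "F (g (i - 1)) = F (h (i - 1))"
    using g_succ[of "i - 1"] h_succ[of "i - 1"] by simp
  then show ?case using inj_onD[OF assms(1)] assms(2,3) by blast
qed

lemma ipow_add:
  assumes "bij_betw S X X" "x \<in> X"
  shows "ipow X S (j + k) x = ipow X S j (ipow X S k x)"
proof (rule int_orbit_unique[where g = "\<lambda>j. ipow X S (j + k) x" and h = "\<lambda>j. ipow X S j (ipow X S k x)"])
  show "inj_on S X" using assms(1) by (rule bij_betw_imp_inj_on)
  show "ipow X S (j + 1 + k) x = S (ipow X S (j + k) x)" for j
    using ipow_succ[OF assms, of "j + k"] by (simp add: ac_simps)
qed (simp_all add: ipow_in ipow_succ assms)

lemma ipow_funpow:
  assumes "bij_betw S X X" "x \<in> X"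
  shows "ipow X (S ^^ n) k x = ipow X S (int n * k) x"
proof (rule int_orbit_unique[where g = "\<lambda>k. ipow X (S ^^ n) k x" and h = "\<lambda>k. ipow X S (int n * k) x"])
  have "bij_betw (S ^^ n) X X" using assms(1) by (rule bij_betw_funpow)
  then show "inj_on (S ^^ n) X" by (rule bij_betw_imp_inj_on)
  show "ipow X S (int n * (k + 1)) x = (S ^^ n) (ipow X S (int n * k) x)" for k
    using ipow_add[OF assms, of "int n" "int n * k"] by (simp add: algebra_simps)
qed (simp_all add: ipow_in ipow_succ assms bij_betw_funpow)

lemma continuous_on_funpow:
  assumes "continuous_on X f" "f ` X \<subseteq> X"
  shows "continuous_on X (f ^^ n)"
proof (induction n)
  case 0
  then show ?case by (simp add: continuous_on_id)
next
  case (Suc n)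
  have "(f ^^ n) ` X \<subseteq> X"
    using assms(2) by (induction n) (auto simp: image_subset_iff)
  then show ?case
    using continuous_on_compose[OF Suc.IH continuous_on_subset[OF assms(1)]] by simp
qed

lemma continuous_on_ipow:
  fixes X :: "'a::metric_space set"
  assumes "compact X" "continuous_on X S" "bij_betw S X X"
  shows "continuous_on X (ipow X S k)"
proof -
  have "continuous_on (S ` X) (the_inv_into X S)"
    using assms by (intro continuous_on_inv) (auto simp: bij_betw_def the_inv_into_f_f)
  then have "continuous_on X (the_inv_into X S)"
    using assms(3) by (simp add: bij_betw_def)
  then show ?thesis
    using assms(2,3) bij_betw_the_inv_into[OF assms(3)]
    by (auto simp: ipow_def bij_betw_def intro!: continuous_on_funpow)
qed

lemma uniformly_continuous_on_ipow:
  fixes X :: "'a::metric_space set"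
  assumes "compact X" "continuous_on X S" "bij_betw S X X"
  shows "uniformly_continuous_on X (ipow X S k)"
  using compact_uniformly_continuous[OF continuous_on_ipow[OF assms] assms(1)] .

lemma uniformly_continuous_on_finite_family:
  assumes "finite J" "\<And>j. j \<in> J \<Longrightarrow> uniformly_continuous_on X (f j)" "e > 0"
  shows "\<exists>\<delta>>0. \<forall>j\<in>J. \<forall>s\<in>X. \<forall>t\<in>X. dist s t < \<delta> \<longrightarrow> dist (f j s) (f j t) < e"
  using assms(1,2)
proof (induction J rule: finite_induct)
  case empty
  show ?case using zero_less_one by blast
next
  case (insert j J)
  then obtain \<delta>1 where "\<delta>1 > 0"
    and \<delta>1: "\<forall>j\<in>J. \<forall>s\<in>X. \<forall>t\<in>X. dist s t < \<delta>1 \<longrightarrow> dist (f j s) (f j t) < e"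
    by blast
  obtain \<delta>2 where "\<delta>2 > 0" and \<delta>2: "\<forall>s\<in>X. \<forall>t\<in>X. dist s t < \<delta>2 \<longrightarrow> dist (f j s) (f j t) < e"
    using insert.prems \<open>e > 0\<close> unfolding uniformly_continuous_on_def by (metis dist_commute insertI1)
  show ?case
    using \<open>\<delta>1 > 0\<close> \<open>\<delta>2 > 0\<close> \<delta>1 \<delta>2 by (intro exI[of _ "min \<delta>1 \<delta>2"]) auto
qed

lemma INF_eq_0_iff_nonneg:
  fixes f :: "'b \<Rightarrow> real"
  assumes "A \<noteq> {}" "\<And>a. a \<in> A \<Longrightarrow> 0 \<le> f a"
  shows "(INF a\<in>A. f a) = 0 \<longleftrightarrow> (\<forall>e>0. \<exists>a\<in>A. f a < e)"
proof -
  have bdd: "bdd_below (f ` A)" using assms(2) by (intro bdd_belowI2[where m = 0])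
  have "0 \<le> (INF a\<in>A. f a)" using assms by (intro cINF_greatest)
  then have "(INF a\<in>A. f a) = 0 \<longleftrightarrow> (\<forall>e>0. (INF a\<in>A. f a) < e)"
    by (metis dense less_irrefl order_le_less)
  also have "\<dots> \<longleftrightarrow> (\<forall>e>0. \<exists>a\<in>A. f a < e)"
    using cINF_less_iff[OF assms(1) bdd] by simp
  finally show ?thesis .
qed

lemma mem_proximal_rel_iff:
  assumes "G \<noteq> {}" "\<And>u v. 0 \<le> rho u v"
  shows "(x, y) \<in> proximal_rel rho Z G \<longleftrightarrow> x \<in> Z \<and> y \<in> Z \<and> (\<forall>e>0. \<exists>g\<in>G. rho (g x) (g y) < e)"
  using INF_eq_0_iff_nonneg[OF assms(1), of "\<lambda>g. rho (g x) (g y)"] assms(2)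
  by (simp add: proximal_rel_def)

lemma mem_Prox_iff:
  "(x, y) \<in> Prox X S \<longleftrightarrow> x \<in> X \<and> y \<in> X \<and> (\<forall>e>0. \<exists>k. dist (ipow X S k x) (ipow X S k y) < e)"
proof -
  have "pow_group X S \<noteq> {}" by (auto simp: pow_group_def)
  then show ?thesis
    unfolding Prox_def by (subst mem_proximal_rel_iff) (auto simp: pow_group_def)
qed

lemma Prox_subset: "Prox X S \<subseteq> X \<times> X"
  by (auto simp: mem_Prox_iff)

lemma compact_Prox:
  assumes "compact X" "closed (Prox X S)"
  shows "compact (Prox X S)"
  using compact_Int_closed[OF compact_Times[OF assms(1,1)] assms(2)] Prox_subset[of X S]
  by (simp add: Int_absorb1)

lemma Prox_ipow:
  assumes "bij_betw S X X" "(x, y) \<in> Prox X S"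
  shows "(ipow X S a x, ipow X S a y) \<in> Prox X S"
  unfolding mem_Prox_iff
proof (intro conjI allI impI)
  have xy: "x \<in> X" "y \<in> X" using assms(2) by (auto simp: mem_Prox_iff)
  then show "ipow X S a x \<in> X" "ipow X S a y \<in> X" using ipow_in[OF assms(1)] by auto
  fix e :: real assume "e > 0"
  then obtain k where "dist (ipow X S k x) (ipow X S k y) < e"
    using assms(2) by (auto simp: mem_Prox_iff)
  then show "\<exists>k. dist (ipow X S k (ipow X S a x)) (ipow X S k (ipow X S a y)) < e"
    using ipow_add[OF assms(1), of _ "k - a" a] xy by (intro exI[of _ "k - a"]) simp
qed

lemma Prox_funpow:
  fixes X :: "'a::metric_space set"
  assumes "compact X" "continuous_on X T" "bij_betw T X X" "n \<ge> 1"
  shows "Prox X (T ^^ n) = Prox X T"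
proof (intro set_eqI)
  fix z :: "'a \<times> 'a"
  obtain x y where z: "z = (x, y)" by fastforce
  have "(\<forall>e>0. \<exists>k. dist (ipow X (T ^^ n) k x) (ipow X (T ^^ n) k y) < e)
    \<longleftrightarrow> (\<forall>e>0. \<exists>k. dist (ipow X T k x) (ipow X T k y) < e)" if xy: "x \<in> X" "y \<in> X"
  proof (intro iffI allI impI)
    fix e :: real
    assume "\<forall>e>0. \<exists>k. dist (ipow X (T ^^ n) k x) (ipow X (T ^^ n) k y) < e" "e > 0"
    then show "\<exists>k. dist (ipow X T k x) (ipow X T k y) < e"
      by (metis ipow_funpow[OF assms(3)] xy)
  next
    fix e :: real
    assume prox: "\<forall>e>0. \<exists>k. dist (ipow X T k x) (ipow X T k y) < e" and "e > 0"
    obtain \<delta> where "\<delta> > 0" and \<delta>: "\<forall>j\<in>{0..<int n}. \<forall>s\<in>X. \<forall>t\<in>X.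
        dist s t < \<delta> \<longrightarrow> dist (ipow X T j s) (ipow X T j t) < e"
      using uniformly_continuous_on_finite_family[of "{0..<int n}" X "ipow X T"]
        uniformly_continuous_on_ipow[OF assms(1-3)] \<open>e > 0\<close> by blast
    obtain k where k: "dist (ipow X T k x) (ipow X T k y) < \<delta>"
      using prox \<open>\<delta> > 0\<close> by blast
    \<comment> \<open>n m is k rounded up to a multiple of n\<close>
    define j where "j = (- k) mod int n"
    define m where "m = - ((- k) div int n)"
    have j: "j \<in> {0..<int n}" using assms(4) by (simp add: j_def)
    have nm: "int n * m = j + k"
      unfolding j_def m_def
      by (metis add.commute minus_mod_eq_mult_div minus_diff_eq diff_minus_eq_add mult_minus_right)
    have "ipow X (T ^^ n) m w = ipow X T j (ipow X T k w)" if "w \<in> X" for w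
      using ipow_funpow[OF assms(3) that] ipow_add[OF assms(3) that] nm by simp
    then show "\<exists>k. dist (ipow X (T ^^ n) k x) (ipow X (T ^^ n) k y) < e"
      using \<delta> j k ipow_in[OF assms(3)] xy by (intro exI[of _ m]) simp
  qed
  then show "z \<in> Prox X (T ^^ n) \<longleftrightarrow> z \<in> Prox X T"
    unfolding z mem_Prox_iff by blast
qed

lemma compact_cluster_point:
  fixes f :: "'i \<Rightarrow> 'b::metric_space"
  assumes "compact K" "\<And>a. f a \<in> K"
    and nonempty: "\<And>\<delta>. \<delta> > 0 \<Longrightarrow> \<exists>a. P \<delta> a"
    and mono: "\<And>\<delta> \<delta>' a. P \<delta> a \<Longrightarrow> \<delta> \<le> \<delta>' \<Longrightarrow> P \<delta>' a"
  shows "\<exists>l\<in>K. \<forall>\<delta>>0. \<exists>a. P \<delta> a \<and> dist (f a) l < \<delta>"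
proof -
  have "\<forall>k. \<exists>a. P (inverse (Suc k)) a" using nonempty by simp
  then obtain a where a: "\<And>k. P (inverse (Suc k)) (a k)" by metis
  obtain l r where "l \<in> K" "strict_mono r" and lim: "(f \<circ> a \<circ> r) \<longlonglongrightarrow> l"
    using assms(1,2) unfolding compact_eq_seq_compact_metric seq_compact_def by (metis comp_apply)
  have "\<exists>a. P \<delta> a \<and> dist (f a) l < \<delta>" if "\<delta> > 0" for \<delta>
  proof -
    obtain N where N: "inverse (Suc N) < \<delta>" using reals_Archimedean[OF \<open>\<delta> > 0\<close>] by blast
    obtain M where M: "\<And>k. k \<ge> M \<Longrightarrow> dist (f (a (r k))) l < \<delta>"
      using lim \<open>\<delta> > 0\<close> unfolding lim_sequentially by auto
    define k where "k = max M N"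
    have "N \<le> r k" using seq_suble[OF \<open>strict_mono r\<close>, of k] by (simp add: k_def)
    then have "inverse (Suc (r k)) \<le> inverse (Suc N)" by (simp add: le_imp_inverse_le)
    then have "inverse (Suc (r k)) \<le> \<delta>" using N by linarith
    then show ?thesis using a[of "r k"] M[of k] mono by (auto simp: k_def)
  qed
  with \<open>l \<in> K\<close> show ?thesis by blast
qed

lemma closed_Prox_simultaneous:
  fixes X :: "'a::metric_space set"
  assumes "compact X" "continuous_on X T" "bij_betw T X X" "closed (Prox X T)"
    and "finite I" "\<And>i. i \<in> I \<Longrightarrow> (x i, y i) \<in> Prox X T" "e > 0"
  shows "\<exists>a. \<forall>i\<in>I. dist (ipow X T a (x i)) (ipow X T a (y i)) < e"
  using assms(5-7)
proof (induction I arbitrary: e rule: finite_induct)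
  case empty
  then show ?case by simp
next
  case (insert i0 I)
  have xy: "x i \<in> X" "y i \<in> X" if "i \<in> insert i0 I" for i
    using insert.prems(1)[OF that] by (auto simp: mem_Prox_iff)
  have "\<exists>l\<in>Prox X T. \<forall>\<delta>>0. \<exists>a.
      (\<forall>i\<in>I. dist (ipow X T a (x i)) (ipow X T a (y i)) < \<delta>)
      \<and> dist (ipow X T a (x i0), ipow X T a (y i0)) l < \<delta>"
  proof (rule compact_cluster_point[OF compact_Prox[OF assms(1,4)]])
    show "(ipow X T a (x i0), ipow X T a (y i0)) \<in> Prox X T" for a
      using Prox_ipow[OF assms(3) insert.prems(1)] by simp
    show "\<exists>a. \<forall>i\<in>I. dist (ipow X T a (x i)) (ipow X T a (y i)) < \<delta>" if "\<delta> > 0" for \<delta>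
      using insert.IH insert.prems(1) that by simp
  qed fastforce
  then obtain p q where "(p, q) \<in> Prox X T" and pq: "\<forall>\<delta>>0. \<exists>a.
      (\<forall>i\<in>I. dist (ipow X T a (x i)) (ipow X T a (y i)) < \<delta>)
      \<and> dist (ipow X T a (x i0), ipow X T a (y i0)) (p, q) < \<delta>"
    by auto
  then have "p \<in> X" "q \<in> X" and prox_pq: "\<forall>e>0. \<exists>k. dist (ipow X T k p) (ipow X T k q) < e"
    by (auto simp: mem_Prox_iff)
  obtain m where m: "dist (ipow X T m p) (ipow X T m q) < e / 3"
    using prox_pq \<open>e > 0\<close> by (meson zero_less_divide_iff zero_less_numeral)
  obtain \<delta> where "\<delta> > 0"
    and \<delta>: "\<forall>s\<in>X. \<forall>t\<in>X. dist s t < \<delta> \<longrightarrow> dist (ipow X T m s) (ipow X T m t) < e / 3"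
    using uniformly_continuous_on_ipow[OF assms(1-3), of m] \<open>e > 0\<close>
    unfolding uniformly_continuous_on_def by (metis dist_commute zero_less_divide_iff zero_less_numeral)
  obtain a where a: "\<forall>i\<in>I. dist (ipow X T a (x i)) (ipow X T a (y i)) < \<delta>"
    and near: "dist (ipow X T a (x i0), ipow X T a (y i0)) (p, q) < \<delta>"
    using pq \<open>\<delta> > 0\<close> by blast
  have shift: "ipow X T (m + a) w = ipow X T m (ipow X T a w)" if "w \<in> X" for w
    using ipow_add[OF assms(3) that] .
  have "dist (ipow X T (m + a) (x i)) (ipow X T (m + a) (y i)) < e" if "i \<in> insert i0 I" for i
  proof (cases "i = i0")
    case True
    let ?x' = "ipow X T a (x i0)" and ?y' = "ipow X T a (y i0)"
    have "?x' \<in> X" "?y' \<in> X" using ipow_in[OF assms(3)] xy[OF that] True by auto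
    have "dist ?x' p < \<delta>" "dist ?y' q < \<delta>"
      using le_less_trans[OF dist_fst_le near] le_less_trans[OF dist_snd_le near] by simp_all
    then have "dist (ipow X T m ?x') (ipow X T m p) < e / 3" "dist (ipow X T m ?y') (ipow X T m q) < e / 3"
      using \<delta> \<open>?x' \<in> X\<close> \<open>?y' \<in> X\<close> \<open>p \<in> X\<close> \<open>q \<in> X\<close> by blast+
    then have "dist (ipow X T m ?x') (ipow X T m ?y') < e"
      using m dist_triangle_third dist_commute by metis
    then show ?thesis using shift xy[OF that] True by simp
  next
    case False
    then have "dist (ipow X T a (x i)) (ipow X T a (y i)) < \<delta>" using a that by blast
    then have "dist (ipow X T m (ipow X T a (x i))) (ipow X T m (ipow X T a (y i))) < e / 3"
      using \<delta> ipow_in[OF assms(3)] xy[OF that] by blast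
    then show ?thesis using shift xy[OF that] \<open>e > 0\<close> by simp
  qed
  then show ?case by blast
qed

lemma dist_d_nonneg: "d \<ge> 1 \<Longrightarrow> 0 \<le> dist_d d u v"
  unfolding dist_d_def by (subst Max_ge_iff) (auto intro: bexI[of _ 1])

lemma dist_d_less_iff: "d \<ge> 1 \<Longrightarrow> dist_d d u v < e \<longleftrightarrow> (\<forall>i\<in>{1..d}. dist (u i) (v i) < e)"
  unfolding dist_d_def by (subst Max_less_iff) auto

lemma mem_proximal_rel_Nd_iff:
  assumes "d \<ge> 1"
  shows "(u, v) \<in> proximal_rel (dist_d d) (Nd d X T) (Gd d X T) \<longleftrightarrow> u \<in> Nd d X T \<and> v \<in> Nd d X T
    \<and> (\<forall>e>0. \<exists>a b. \<forall>i\<in>{1..d}. dist (ipow X T (a + int i * b) (u i)) (ipow X T (a + int i * b) (v i)) < e)"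
proof -
  have "Gd d X T \<noteq> {}" by (auto simp: Gd_def)
  moreover have "(\<exists>g\<in>Gd d X T. dist_d d (g u) (g v) < e) \<longleftrightarrow>
      (\<exists>a b. \<forall>i\<in>{1..d}. dist (ipow X T (a + int i * b) (u i)) (ipow X T (a + int i * b) (v i)) < e)" for e
  proof -
    have "(\<exists>g\<in>Gd d X T. dist_d d (g u) (g v) < e) \<longleftrightarrow> (\<exists>a b.
        dist_d d (restr_d d (\<lambda>i. ipow X T (a + int i * b) (u i))) (restr_d d (\<lambda>i. ipow X T (a + int i * b) (v i))) < e)"
      unfolding Gd_def by auto
    then show ?thesis by (simp add: dist_d_less_iff[OF assms] restr_d_def)
  qed
  ultimately show ?thesis
    by (simp add: mem_proximal_rel_iff[OF _ dist_d_nonneg[OF assms]])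
qed

lemma Nd_coordinate_in:
  fixes X :: "'a::metric_space set"
  assumes "closed X" "bij_betw T X X" "u \<in> Nd d X T" "i \<in> {1..d}"
  shows "u i \<in> X"
proof -
  have "closed {f :: nat \<Rightarrow> 'a. f i \<in> X}"
    using closed_vimage[OF assms(1) continuous_on_product_coordinates[of i]] by (simp add: vimage_def)
  moreover have "{restr_d d (\<lambda>i. ipow X T (p + int i * q) x) | x p q. x \<in> X} \<subseteq> {f. f i \<in> X}"
    using assms(4) ipow_in[OF assms(2)] by (auto simp: restr_d_def)
  ultimately have "Nd d X T \<subseteq> {f. f i \<in> X}" unfolding Nd_def by (rule closure_minimal[rotated])
  then show ?thesis using assms(3) by blast
qed

lemma proximal_rel_Nd:
  fixes X :: "'a::metric_space set"
  assumes "compact X" "continuous_on X T" "bij_betw T X X" "closed (Prox X T)" "d \<ge> 1"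
  shows "proximal_rel (dist_d d) (Nd d X T) (Gd d X T)
    = {(u, v). u \<in> Nd d X T \<and> v \<in> Nd d X T \<and> (\<forall>i\<in>{1..d}. (u i, v i) \<in> Prox X T)}"
proof (intro set_eqI iffI; clarify)
  fix u v
  assume "(u, v) \<in> proximal_rel (dist_d d) (Nd d X T) (Gd d X T)"
  then have "u \<in> Nd d X T" "v \<in> Nd d X T"
    and prox: "\<forall>e>0. \<exists>a b. \<forall>i\<in>{1..d}. dist (ipow X T (a + int i * b) (u i)) (ipow X T (a + int i * b) (v i)) < e"
    by (simp_all add: mem_proximal_rel_Nd_iff[OF assms(5)])
  moreover have "(u i, v i) \<in> Prox X T" if "i \<in> {1..d}" for i
  proof -
    have "u i \<in> X" "v i \<in> X"
      using Nd_coordinate_in[OF compact_imp_closed[OF assms(1)] assms(3)] \<open>u \<in> Nd d X T\<close> \<open>v \<in> Nd d X T\<close> that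
      by simp_all
    moreover have "\<exists>k. dist (ipow X T k (u i)) (ipow X T k (v i)) < e" if "e > 0" for e
      using prox that \<open>i \<in> {1..d}\<close> by blast
    ultimately show ?thesis by (simp add: mem_Prox_iff)
  qed
  ultimately show "u \<in> Nd d X T \<and> v \<in> Nd d X T \<and> (\<forall>i\<in>{1..d}. (u i, v i) \<in> Prox X T)" by blast
next
  fix u v
  assume "u \<in> Nd d X T" "v \<in> Nd d X T" and prox: "\<forall>i\<in>{1..d}. (u i, v i) \<in> Prox X T"
  moreover have "\<exists>a b. \<forall>i\<in>{1..d}. dist (ipow X T (a + int i * b) (u i)) (ipow X T (a + int i * b) (v i)) < e"
    if "e > 0" for e
  proof -
    have "\<exists>a. \<forall>i\<in>{1..d}. dist (ipow X T a (u i)) (ipow X T a (v i)) < e"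
      by (rule closed_Prox_simultaneous[OF assms(1-4) finite_atLeastAtMost]) (use prox that in auto)
    then obtain a where "\<forall>i\<in>{1..d}. dist (ipow X T a (u i)) (ipow X T a (v i)) < e" ..
    then show ?thesis by (intro exI[of _ a] exI[of _ 0]) simp
  qed
  ultimately show "(u, v) \<in> proximal_rel (dist_d d) (Nd d X T) (Gd d X T)"
    by (simp add: mem_proximal_rel_Nd_iff[OF assms(5)])
qed

theorem lemma4p1:
  fixes X :: "'a::metric_space set" and T :: "'a \<Rightarrow> 'a" and d :: nat
  assumes "compact X" and "X \<noteq> {}"
    and "continuous_on X T" and "T ` X = X" and "inj_on T X"
    and "d \<ge> 1"
  shows "(\<forall>n::nat. n \<ge> 1 \<longrightarrow> Prox X T = Prox X (T ^^ n))
    \<and> (closed (Prox X T) \<longrightarrow>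
         proximal_rel (dist_d d) (Nd d X T) (Gd d X T)
         = {(u, v). u \<in> Nd d X T \<and> v \<in> Nd d X T \<and> (\<forall>i\<in>{1..d}. (u i, v i) \<in> Prox X T)})"
proof -
  have bij: "bij_betw T X X" using assms(4,5) by (simp add: bij_betw_def)
  show ?thesis
    using Prox_funpow[OF assms(1,3) bij] proximal_rel_Nd[OF assms(1,3) bij _ assms(6)] by simp
qed

end
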